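(* Let $B$ be a regular ROBP of length $n$ and width $w$, where $n\ge2$ is a power of $2$, with random walk matrices $\mathbf{M}_i$ and $\mathbf{M}_{\ell..r}$ as in the context. Let $0<\gamma<1/2$ and $\varepsilon^{(i)}=\frac{\gamma^{i+1}}{10(i+1)^2\log(n)}$ for integers $i\ge0$. For every $(\ell,r)\in\mathsf{BS}_n$ let $\mathbf{M}^{(0)}_{\ell..r}$ be an $(\varepsilon^{(0)}/3)$-SV approximation of $\mathbf{M}_{\ell..r}$, and define $\mathbf{M}^{(k)}_{\ell..r}$ by the recursion in the context. Then for every integer $k\ge0$ and every $(\ell,r)\in\mathsf{BS}_n$, $\mathbf{M}^{(k)}_{\ell..r}$ is a $C_t\varepsilon^{(k)}$-SV approximation of $\mathbf{M}_{\ell..r}$, where $t=\log(r-\ell)$ and $C_t=(1+1/\log(n))^t/3$.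
   Context: Logarithms are base $2$. A ROBP of length $n$ and width $w$ is given by transition functions $B_i:[w]\times\{0,1\}\to[w]$, $i\in[n]$; it is regular if for every $i$ every $v\in[w]$ has exactly two preimages $(u,b)$ under $B_i$. $\mathbf{M}_i(b)[u,v]=1$ if $B_i(u,b)=v$ and $0$ otherwise; $\mathbf{M}_i=\frac12(\mathbf{M}_i(0)+\mathbf{M}_i(1))$ (doubly stochastic by regularity); $\mathbf{M}_{\ell..r}=\prod_{i=\ell+1}^r\mathbf{M}_i$. $\mathsf{BS}_n=\{(\ell,r):\exists i,k\ge 0,\ \ell=i2^k,\ r=\ell+2^k,\ 0\le\ell<r\le n\}$. Recursion: for $(\ell,r)\in\mathsf{BS}_n$ with $r-\ell=1$ and $k\ge1$, $\mathbf{M}^{(k)}_{\ell..r}=\mathbf{M}_r$; for $r-\ell\ge2$ and $k\ge1$, with $m=(\ell+r)/2$, $\mathbf{M}^{(k)}_{\ell..r}=\sum_{i+j=k}\mathbf{M}^{(i)}_{\ell..m}\mathbf{M}^{(j)}_{m..r}-\sum_{i+j=k-1}\mathbf{M}^{(i)}_{\ell..m}\mathbf{M}^{(j)}_{m..r}$ (sums over integers $i,j\ge0$). For $\mathbf{A}\in\mathbb{R}^{w\times w}$, $y\in\mathbb{R}^w$, let $D(\mathbf{A},y)=\|y\|_2^2-\|\mathbf{A}y\|_2^2$. For a doubly stochastic $\mathbf{W}$, a (not necessarily stochastic) matrix $\widetilde{\mathbf{W}}$ is an $\varepsilon$-SV approximation of $\mathbf{W}$ if for all $x,y\in\mathbb{R}^w$,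 $|x^\top(\widetilde{\mathbf{W}}-\mathbf{W})y|\le\varepsilon\cdot\frac{D(\mathbf{W}^\top,x)+D(\mathbf{W},y)}{2}$. *)

theory Defs
  imports "HOL-Analysis.Analysis"
begin

text \<open>A ROBP of length n and width given by the finite type 'w: transition functions
  B i :: 'w => bool => 'w for i in {1..n} (bits 0/1 rendered as False/True).\<close>

definition regular_robp :: "nat \<Rightarrow> (nat \<Rightarrow> 'w::finite \<Rightarrow> bool \<Rightarrow> 'w) \<Rightarrow> bool" where
  "regular_robp n B \<longleftrightarrow> (\<forall>i\<in>{1..n}. \<forall>v. card {(u, b). B i u b = v} = 2)"

definition Mbit :: "(nat \<Rightarrow> 'w::finite \<Rightarrow> bool \<Rightarrow> 'w) \<Rightarrow> nat \<Rightarrow> bool \<Rightarrow> real^'w^'w" where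
  "Mbit B i b = (\<chi> u v. if B i u b = v then 1 else 0)"

definition Mstep :: "(nat \<Rightarrow> 'w::finite \<Rightarrow> bool \<Rightarrow> 'w) \<Rightarrow> nat \<Rightarrow> real^'w^'w" where
  "Mstep B i = (1/2) *\<^sub>R (Mbit B i False + Mbit B i True)"

text \<open>M_{l..r} = M_{l+1} M_{l+2} ... M_r (ordered product).\<close>
definition Mrange :: "(nat \<Rightarrow> 'w::finite \<Rightarrow> bool \<Rightarrow> 'w) \<Rightarrow> nat \<Rightarrow> nat \<Rightarrow> real^'w^'w" where
  "Mrange B l r = foldl (\<lambda>A i. A ** Mstep B i) (mat 1) [Suc l..<Suc r]"

definition BS :: "nat \<Rightarrow> (nat \<times> nat) set" where
  "BS n = {(l, r). \<exists>i k. l = i * 2 ^ k \<and> r = l + 2 ^ k \<and> l < r \<and> r \<le> n}"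

text \<open>The recursion; the case r - l = 0 never occurs for (l,r) in BS n and is arbitrary.\<close>
function approxM :: "(nat \<Rightarrow> nat \<Rightarrow> real^'w^'w) \<Rightarrow> (nat \<Rightarrow> 'w::finite \<Rightarrow> bool \<Rightarrow> 'w)
    \<Rightarrow> nat \<Rightarrow> nat \<Rightarrow> nat \<Rightarrow> real^'w^'w" where
  "approxM M0 B k l r =
     (if k = 0 then M0 l r
      else if r \<le> Suc l then Mstep B r
      else (let m = (l + r) div 2 in
              (\<Sum>i\<le>k. approxM M0 B i l m ** approxM M0 B (k - i) m r)
            - (\<Sum>i\<le>k - 1. approxM M0 B i l m ** approxM M0 B (k - 1 - i) m r)))"
  by pat_completeness auto
termination
  by (relation "Wellfounded.measure (\<lambda>(M0, B, k, l, r). r - l)") auto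

definition Dq :: "real^'w^'w \<Rightarrow> real^'w \<Rightarrow> real" where
  "Dq A y = (norm y)\<^sup>2 - (norm (A *v y))\<^sup>2"

definition sv_approx :: "real \<Rightarrow> real^'w^'w \<Rightarrow> real^'w^'w \<Rightarrow> bool" where
  "sv_approx eps W Wt \<longleftrightarrow>
     (\<forall>x y. \<bar>x \<bullet> ((Wt - W) *v y)\<bar> \<le> eps * (Dq (transpose W) x + Dq W y) / 2)"

definition epsi :: "real \<Rightarrow> nat \<Rightarrow> nat \<Rightarrow> real" where
  "epsi \<gamma> n i = \<gamma> ^ (i + 1) / (10 * (real i + 1)^2 * log 2 (real n))"

definition Ct :: "nat \<Rightarrow> real \<Rightarrow> real" where
  "Ct n t = (1 + 1 / log 2 (real n)) powr t / 3"

end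

theory Submission
  imports Defs
begin

text \<open>Induction on the level t = log (r - l) of the dyadic interval. Write the approximations of
  the two halves as exact matrix plus error, A + E_i and B + F_j. The alternating sum of the
  recursion telescopes to AB + A F_k + E_k B plus the cross terms E_i F_j, summed over i + j = k
  minus summed over i + j = k - 1.
  Since D is additive along products, D(AB, y) = D(B, y) + D(A, By), the two first-order terms
  cost only the error of the level below. A cross term costs eps_i eps_j, because the SV bound
  applied to the vector E_i^T x controls the norm of that very vector. As the convolution of
  1/(i+1)^2 with itself is O(1/(k+1)^2), the cross terms add at most a 1/log n fraction of eps_k,
  so each level multiplies the constant by 1 + 1/log n; over at most log n levels it stays below
  e/3, which is what keeps the cross terms that small.\<close>

section \<open>Doubly stochastic matrices\<close>

definition doubly_stochastic :: "real^'n::finite^'n \<Rightarrow> bool" where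
  "doubly_stochastic A \<longleftrightarrow> (\<forall>i j. 0 \<le> A$i$j) \<and> (\<forall>i. (\<Sum>j\<in>UNIV. A$i$j) = 1) \<and> (\<forall>j. (\<Sum>i\<in>UNIV. A$i$j) = 1)"

lemma doubly_stochastic_mat_1: "doubly_stochastic (mat 1 :: real^'n::finite^'n)"
  unfolding doubly_stochastic_def by (auto simp: mat_def if_distrib sum.delta cong: if_cong)

lemma doubly_stochastic_transpose: "doubly_stochastic A \<Longrightarrow> doubly_stochastic (transpose A)"
  unfolding doubly_stochastic_def transpose_def by auto

lemma doubly_stochastic_matrix_mul:
  fixes A B :: "real^'n::finite^'n"
  assumes A: "doubly_stochastic A" and B: "doubly_stochastic B"
  shows "doubly_stochastic (A ** B)"
proof -
  have "(\<Sum>k\<in>UNIV. (A ** B)$i$k) = (\<Sum>j\<in>UNIV. A$i$j * (\<Sum>k\<in>UNIV. B$j$k))" for i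
    unfolding matrix_matrix_mult_def by (simp add: sum_distrib_left) (rule sum.swap)
  moreover have "(\<Sum>i\<in>UNIV. (A ** B)$i$k) = (\<Sum>j\<in>UNIV. (\<Sum>i\<in>UNIV. A$i$j) * B$j$k)" for k
    unfolding matrix_matrix_mult_def by (simp add: sum_distrib_right) (rule sum.swap)
  moreover have "0 \<le> (A ** B)$i$k" for i k
    using A B unfolding doubly_stochastic_def matrix_matrix_mult_def by (auto intro!: sum_nonneg)
  ultimately show ?thesis
    using A B unfolding doubly_stochastic_def by simp
qed

lemma square_weighted_mean_le:
  fixes a y :: "'i \<Rightarrow> real"
  assumes "\<And>j. j \<in> S \<Longrightarrow> 0 \<le> a j" and "sum a S = 1"
  shows "(\<Sum>j\<in>S. a j * y j)\<^sup>2 \<le> (\<Sum>j\<in>S. a j * (y j)\<^sup>2)"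
proof -
  define m where "m = (\<Sum>j\<in>S. a j * y j)"
  have "0 \<le> (\<Sum>j\<in>S. a j * (y j - m)\<^sup>2)"
    using assms by (intro sum_nonneg) auto
  also have "\<dots> = (\<Sum>j\<in>S. a j * (y j)\<^sup>2) - 2 * m * (\<Sum>j\<in>S. a j * y j) + m\<^sup>2 * sum a S"
    by (simp add: power2_diff algebra_simps sum.distrib sum_subtractf sum_distrib_left sum_distrib_right)
  finally show ?thesis
    using assms(2) unfolding m_def by (simp add: power2_eq_square)
qed

lemma doubly_stochastic_norm_le:
  fixes A :: "real^'n::finite^'n"
  assumes "doubly_stochastic A"
  shows "norm (A *v y) \<le> norm y"
proof -
  have "(norm (A *v y))\<^sup>2 = (\<Sum>i\<in>UNIV. (\<Sum>j\<in>UNIV. A$i$j * y$j)\<^sup>2)"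
    by (simp only: power2_norm_eq_inner) (simp add: inner_vec_def matrix_vector_mult_def power2_eq_square)
  also have "\<dots> \<le> (\<Sum>i\<in>UNIV. \<Sum>j\<in>UNIV. A$i$j * (y$j)\<^sup>2)"
    using assms unfolding doubly_stochastic_def by (intro sum_mono square_weighted_mean_le) auto
  also have "\<dots> = (\<Sum>j\<in>UNIV. (\<Sum>i\<in>UNIV. A$i$j) * (y$j)\<^sup>2)"
    by (simp add: sum_distrib_right) (rule sum.swap)
  also have "\<dots> = (norm y)\<^sup>2"
    unfolding power2_norm_eq_inner inner_vec_def
    using assms by (simp add: doubly_stochastic_def power2_eq_square)
  finally show ?thesis
    by (rule power2_le_imp_le) simp
qed

section \<open>Random walk matrices of a regular ROBP\<close>

lemma card_preimage_bool:
  fixes f :: "'a::finite \<Rightarrow> bool \<Rightarrow> 'b"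
  shows "card {(u, b). f u b = v} = card {u. f u False = v} + card {u. f u True = v}"
proof -
  have "{(u, b). f u b = v} = (\<lambda>u. (u, False)) ` {u. f u False = v} \<union> (\<lambda>u. (u, True)) ` {u. f u True = v}"
  proof (rule set_eqI)
    fix p :: "'a \<times> bool"
    show "p \<in> {(u, b). f u b = v} \<longleftrightarrow> p \<in> (\<lambda>u. (u, False)) ` {u. f u False = v} \<union> (\<lambda>u. (u, True)) ` {u. f u True = v}"
      by (cases p; cases "snd p") auto
  qed
  also have "card \<dots> = card {u. f u False = v} + card {u. f u True = v}"
    by (subst card_Un_disjoint) (auto simp: card_image inj_on_def)
  finally show ?thesis .
qed

lemma Mstep_doubly_stochastic:
  assumes "regular_robp n B" "i \<in> {1..n}"
  shows "doubly_stochastic (Mstep B i)"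
proof -
  have entry: "Mstep B i $ u $ v = (of_bool (B i u False = v) + of_bool (B i u True = v)) / 2" for u v
    by (simp add: Mstep_def Mbit_def)
  have "(\<Sum>u\<in>UNIV. Mstep B i $ u $ v) = 1" for v
  proof -
    have "card {(u, b). B i u b = v} = 2"
      using assms unfolding regular_robp_def by blast
    then show ?thesis
      by (simp add: entry sum.distrib card_preimage_bool flip: sum_divide_distrib)
  qed
  then show ?thesis
    by (simp add: doubly_stochastic_def entry sum.distrib flip: sum_divide_distrib)
qed

lemma foldl_matrix_mul:
  fixes M :: "'i \<Rightarrow> real^'n::finite^'n" and X :: "real^'n^'n"
  shows "foldl (\<lambda>A i. A ** M i) X xs = X ** foldl (\<lambda>A i. A ** M i) (mat 1) xs"
proof (induction xs arbitrary: X)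
  case Nil
  then show ?case by simp
next
  case (Cons a xs)
  show ?case
    using Cons.IH[of "X ** M a"] Cons.IH[of "M a"] by (simp add: matrix_mul_assoc)
qed

lemma Mrange_split:
  assumes "l \<le> m" "m \<le> r"
  shows "Mrange B l r = Mrange B l m ** Mrange B m r"
proof -
  have "[Suc l..<Suc r] = [Suc l..<Suc m] @ [Suc m..<Suc r]"
    using assms upt_add_eq_append[of "Suc l" "Suc m" "r - m"] by simp
  then show ?thesis
    unfolding Mrange_def by (simp only: foldl_append) (rule foldl_matrix_mul)
qed

lemma Mrange_Suc: "Mrange B l (Suc l) = Mstep B (Suc l)"
  unfolding Mrange_def by simp

lemma Mrange_doubly_stochastic:
  assumes "regular_robp n B" "r \<le> n"
  shows "doubly_stochastic (Mrange B l r)"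
proof -
  have foldl_Mstep: "doubly_stochastic (foldl (\<lambda>A i. A ** Mstep B i) X xs)"
    if "set xs \<subseteq> {1..n}" "doubly_stochastic X" for xs X
    using that
    by (induction xs arbitrary: X) (simp_all add: doubly_stochastic_matrix_mul Mstep_doubly_stochastic[OF assms(1)])
  show ?thesis
    unfolding Mrange_def by (rule foldl_Mstep) (use assms(2) doubly_stochastic_mat_1 in auto)
qed

section \<open>Spectral approximation\<close>

lemma Dq_scaleR: "Dq A (c *\<^sub>R y) = c\<^sup>2 * Dq A y"
  unfolding Dq_def by (simp add: matrix_vector_mult_scaleR power_mult_distrib algebra_simps)

lemma Dq_le_norm: "Dq A y \<le> (norm y)\<^sup>2"
  unfolding Dq_def by simp

lemma Dq_nonneg: "doubly_stochastic A \<Longrightarrow> 0 \<le> Dq A y"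
  unfolding Dq_def using doubly_stochastic_norm_le[of A y] by (simp add: power_mono)

lemma Dq_matrix_mul: "Dq (A ** B) y = Dq B y + Dq A (B *v y)"
  unfolding Dq_def by (simp add: matrix_vector_mul_assoc[symmetric])

lemma Dq_transpose_matrix_mul:
  "Dq (transpose (A ** B)) x = Dq (transpose A) x + Dq (transpose B) (transpose A *v x)"
  unfolding Dq_def by (simp add: vector_matrix_mul_assoc[symmetric])

lemma Dq_factors_le_Dq_matrix_mul:
  assumes "doubly_stochastic A" "doubly_stochastic B"
  shows "Dq (transpose A) x + Dq B y \<le> Dq (transpose (A ** B)) x + Dq (A ** B) y"
  using Dq_nonneg[OF assms(1)] Dq_nonneg[OF doubly_stochastic_transpose[OF assms(2)]]
  by (simp add: Dq_matrix_mul Dq_transpose_matrix_mul add_increasing2)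

lemma sv_approx_refl: "0 \<le> e \<Longrightarrow> doubly_stochastic W \<Longrightarrow> sv_approx e W W"
  unfolding sv_approx_def
  using Dq_nonneg doubly_stochastic_transpose by (auto intro!: mult_nonneg_nonneg add_nonneg_nonneg)

lemma sv_approx_mono:
  assumes "sv_approx e W W'" "e \<le> e'" "doubly_stochastic W"
  shows "sv_approx e' W W'"
  unfolding sv_approx_def
proof (intro allI)
  fix x y
  have "0 \<le> Dq (transpose W) x + Dq W y"
    using Dq_nonneg[OF assms(3)] Dq_nonneg[OF doubly_stochastic_transpose[OF assms(3)]] by simp
  then have "e * (Dq (transpose W) x + Dq W y) / 2 \<le> e' * (Dq (transpose W) x + Dq W y) / 2"
    using assms(2) by (simp add: mult_right_mono divide_right_mono)
  then show "\<bar>x \<bullet> ((W' - W) *v y)\<bar> \<le> e' * (Dq (transpose W) x + Dq W y) / 2"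
    using assms(1) unfolding sv_approx_def by (meson order_trans)
qed

lemma sv_approx_rescaled:
  assumes "sv_approx e W W'" "a \<noteq> 0"
  shows "\<bar>x \<bullet> ((W' - W) *v y)\<bar> \<le> e * (a\<^sup>2 * Dq (transpose W) x + Dq W y / a\<^sup>2) / 2"
proof -
  have "\<bar>(a *\<^sub>R x) \<bullet> ((W' - W) *v ((1/a) *\<^sub>R y))\<bar>
      \<le> e * (Dq (transpose W) (a *\<^sub>R x) + Dq W ((1/a) *\<^sub>R y)) / 2"
    using assms(1) unfolding sv_approx_def by blast
  then show ?thesis
    using assms(2) by (simp add: matrix_vector_mult_scaleR Dq_scaleR power_divide)
qed

lemma sv_approx_transpose_error_norm:
  assumes "sv_approx e W W'" "0 < e"
  shows "(norm (transpose (W' - W) *v x))\<^sup>2 \<le> e\<^sup>2 * Dq (transpose W) x"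
proof -
  define u where "u = transpose (W' - W) *v x"
  have "(norm u)\<^sup>2 = x \<bullet> ((W' - W) *v u)"
    unfolding u_def power2_norm_eq_inner by (simp add: dot_lmul_matrix)
  also have "\<dots> \<le> e * ((sqrt e)\<^sup>2 * Dq (transpose W) x + Dq W u / (sqrt e)\<^sup>2) / 2"
    using sv_approx_rescaled[OF assms(1), of "sqrt e" x u] assms(2) by simp
  also have "\<dots> = (e\<^sup>2 * Dq (transpose W) x + Dq W u) / 2"
    using assms(2) by (simp add: power2_eq_square field_simps)
  also have "\<dots> \<le> (e\<^sup>2 * Dq (transpose W) x + (norm u)\<^sup>2) / 2"
    using Dq_le_norm[of W u] by simp
  finally show ?thesis
    unfolding u_def by simp
qed

lemma sv_approx_error_product:
  assumes A: "sv_approx a A A'" "0 < a" and B: "sv_approx b B B'" "0 < b"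
  shows "\<bar>x \<bullet> (((A' - A) ** (B' - B)) *v y)\<bar> \<le> a * b * (Dq (transpose A) x + Dq B y) / 2"
proof -
  define u where "u = transpose (A' - A) *v x"
  have "\<bar>x \<bullet> (((A' - A) ** (B' - B)) *v y)\<bar> = \<bar>u \<bullet> ((B' - B) *v y)\<bar>"
    unfolding u_def by (simp add: dot_lmul_matrix matrix_vector_mul_assoc[symmetric])
  also have "\<dots> \<le> b * (Dq (transpose B) u / a + a * Dq B y) / 2"
    using sv_approx_rescaled[OF B(1), of "sqrt (1/a)" u y] A(2) by (simp add: mult.commute)
  also have "\<dots> \<le> b * (a * Dq (transpose A) x + a * Dq B y) / 2"
  proof -
    have "Dq (transpose B) u \<le> a\<^sup>2 * Dq (transpose A) x"
      using Dq_le_norm[of "transpose B" u] sv_approx_transpose_error_norm[OF A] unfolding u_def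
      by (rule order_trans)
    then have "Dq (transpose B) u / a \<le> a * Dq (transpose A) x"
      using A(2) by (simp add: divide_le_eq power2_eq_square mult.commute)
    then show ?thesis
      using B(2) by (simp add: mult_left_mono divide_right_mono)
  qed
  finally show ?thesis
    by (simp add: algebra_simps)
qed

section \<open>The error parameters\<close>

lemma sum_atMost_reflect: "(\<Sum>i\<le>k. f (k - i)) = (\<Sum>i\<le>(k::nat). f i)"
  using sum.atLeastAtMost_rev[of f 0 k] by (simp add: atLeast0AtMost)

lemma inverse_square_sum_le: "(\<Sum>i\<le>K. 1 / (real i + 1)\<^sup>2) \<le> 7/4"
proof -
  have telescoped: "(\<Sum>i\<le>K. 1 / (real i + 1)\<^sup>2) \<le> 7/4 - 1 / (real K + 1)" if "1 \<le> K" for K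
    using that
  proof (induction K rule: nat_induct_at_least)
    case base
    then show ?case by (simp add: numeral_2_eq_2)
  next
    case (Suc K)
    have "1 / (real K + 2)\<^sup>2 \<le> 1 / ((real K + 1) * (real K + 2))"
      by (intro divide_left_mono) (auto simp: power2_eq_square)
    also have "\<dots> = 1 / (real K + 1) - 1 / (real K + 2)"
      by (simp add: field_simps)
    finally show ?case
      using Suc.IH by (simp add: add.commute)
  qed
  show ?thesis
  proof (cases K)
    case 0
    then show ?thesis by simp
  next
    case (Suc K')
    have "0 \<le> 1 / (real K + 1)"
      by simp
    then show ?thesis
      using telescoped[of K] Suc by linarith
  qed
qed

lemma inverse_square_product_le:
  fixes a b N :: real
  assumes "0 < a" "0 < b" "0 < N" "N \<le> a + b"
  shows "1 / (a\<^sup>2 * b\<^sup>2) \<le> (2 / a\<^sup>2 + 2 / b\<^sup>2) / N\<^sup>2"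
proof -
  have "N\<^sup>2 \<le> (a + b)\<^sup>2"
    using assms by (intro power_mono) auto
  also have "\<dots> \<le> 2 * a\<^sup>2 + 2 * b\<^sup>2"
    using sum_squares_bound[of a b] by (simp add: power2_sum)
  finally show ?thesis
    using assms by (simp add: field_simps)
qed

lemma inverse_square_convolution_le:
  assumes "K' \<le> Suc K"
  shows "(\<Sum>i\<le>K. 1 / ((real i + 1)\<^sup>2 * (real (K - i) + 1)\<^sup>2)) \<le> 7 / (real K' + 1)\<^sup>2"
proof -
  have "(\<Sum>i\<le>K. 1 / ((real i + 1)\<^sup>2 * (real (K - i) + 1)\<^sup>2))
      \<le> (\<Sum>i\<le>K. (2 / (real i + 1)\<^sup>2 + 2 / (real (K - i) + 1)\<^sup>2) / (real K' + 1)\<^sup>2)"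
    using assms by (intro sum_mono inverse_square_product_le) (auto simp: of_nat_diff)
  also have "\<dots> = (2 * (\<Sum>i\<le>K. 1 / (real i + 1)\<^sup>2) + 2 * (\<Sum>i\<le>K. 1 / (real (K - i) + 1)\<^sup>2))
      / (real K' + 1)\<^sup>2"
    by (simp only: sum_divide_distrib[symmetric] sum.distrib sum_distrib_left times_divide_eq_right
        mult_1_right)
  also have "\<dots> = 4 * (\<Sum>i\<le>K. 1 / (real i + 1)\<^sup>2) / (real K' + 1)\<^sup>2"
    unfolding sum_atMost_reflect[of "\<lambda>i. 1 / (real i + 1)\<^sup>2" K] by simp
  also have "\<dots> \<le> 7 / (real K' + 1)\<^sup>2"
    using inverse_square_sum_le[of K] by (simp add: divide_right_mono)
  finally show ?thesis .
qed

lemma one_plus_inverse_power_le_exp_1: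
  assumes "s \<le> p"
  shows "(1 + 1 / real p) ^ s \<le> exp 1"
proof (cases "p = 0")
  case True
  then show ?thesis using assms by simp
next
  case False
  have "(1 + 1 / real p) ^ s \<le> (1 + 1 / real p) ^ p"
    using assms by (intro power_increasing) auto
  also have "\<dots> \<le> exp 1"
    using exp_ge_one_plus_x_over_n_power_n[of p 1] False by simp
  finally show ?thesis .
qed

lemma epsi_convolution:
  "(\<Sum>i\<le>m. epsi \<gamma> n i * epsi \<gamma> n (m - i))
     = \<gamma> ^ (m + 2) / (10 * log 2 (real n))\<^sup>2 * (\<Sum>i\<le>m. 1 / ((real i + 1)\<^sup>2 * (real (m - i) + 1)\<^sup>2))"
proof -
  have "epsi \<gamma> n i * epsi \<gamma> n (m - i)
      = \<gamma> ^ (m + 2) / (10 * log 2 (real n))\<^sup>2 * (1 / ((real i + 1)\<^sup>2 * (real (m - i) + 1)\<^sup>2))"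
    if "i \<le> m" for i
  proof -
    have "\<gamma> ^ (i + 1) * \<gamma> ^ (m - i + 1) = \<gamma> ^ (m + 2)"
      using that by (simp flip: power_add)
    then show ?thesis
      unfolding epsi_def by (simp add: power2_eq_square field_simps)
  qed
  then show ?thesis
    by (simp add: sum_distrib_left)
qed

lemma epsi_convolution_bound:
  assumes "0 < \<gamma>" "\<gamma> < 1/2" "0 < log 2 (real n)" "0 \<le> c" "c \<le> exp 1 / 3"
  shows "c\<^sup>2 * ((\<Sum>i\<le>Suc k. epsi \<gamma> n i * epsi \<gamma> n (Suc k - i)) + (\<Sum>i\<le>k. epsi \<gamma> n i * epsi \<gamma> n (k - i)))
         \<le> c / log 2 (real n) * epsi \<gamma> n (Suc k)"
proof -
  define L where "L = log 2 (real n)"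
  define d where "d = (real (Suc k) + 1)\<^sup>2"
  have "0 < L" "0 < d"
    using assms(3) unfolding L_def d_def by simp_all
  have "(\<Sum>i\<le>m. epsi \<gamma> n i * epsi \<gamma> n (m - i)) \<le> \<gamma> ^ (m + 2) / (10 * L)\<^sup>2 * (7 / d)"
    if "k \<le> m" for m
    unfolding epsi_convolution L_def d_def using assms(1) that
    by (intro mult_left_mono inverse_square_convolution_le) auto
  from this[of "Suc k"] this[of k]
  have "c\<^sup>2 * ((\<Sum>i\<le>Suc k. epsi \<gamma> n i * epsi \<gamma> n (Suc k - i)) + (\<Sum>i\<le>k. epsi \<gamma> n i * epsi \<gamma> n (k - i)))
      \<le> c\<^sup>2 * (\<gamma> ^ (k + 3) / (10 * L)\<^sup>2 * (7 / d) + \<gamma> ^ (k + 2) / (10 * L)\<^sup>2 * (7 / d))"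
    by (intro mult_left_mono add_mono) (auto simp: numeral_3_eq_3)
  also have "\<dots> = c * \<gamma> ^ (k + 2) * (7 / d) / (10 * L)\<^sup>2 * (c * (\<gamma> + 1))"
    by (simp add: power2_eq_square numeral_3_eq_3 algebra_simps add_divide_distrib)
  also have "\<dots> \<le> c * \<gamma> ^ (k + 2) * (7 / d) / (10 * L)\<^sup>2 * (10 / 7)"
    \<comment> \<open>this is where the factor 10 in epsi is needed: 7 (e/3) (3/2) < 10\<close>
  proof (rule mult_left_mono)
    have "c * (\<gamma> + 1) \<le> exp 1 / 3 * (3 / 2)"
      using assms by (intro mult_mono) auto
    then show "c * (\<gamma> + 1) \<le> 10 / 7"
      using e_less_272 by linarith
    show "0 \<le> c * \<gamma> ^ (k + 2) * (7 / d) / (10 * L)\<^sup>2"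
      using assms \<open>0 < d\<close> by simp
  qed
  also have "\<dots> = c / L * epsi \<gamma> n (Suc k)"
    using \<open>0 < L\<close> \<open>0 < d\<close> unfolding epsi_def d_def[symmetric] L_def[symmetric]
    by (simp add: field_simps power2_eq_square)
  finally show ?thesis
    unfolding L_def .
qed

section \<open>One level of the recursion\<close>

lemma sum_convolution_difference:
  fixes c :: "'a::ab_group_add" and p q :: "nat \<Rightarrow> 'a" and r :: "nat \<Rightarrow> nat \<Rightarrow> 'a"
  shows "(\<Sum>i\<le>Suc k. c + p (Suc k - i) + q i + r i (Suc k - i)) - (\<Sum>i\<le>k. c + p (k - i) + q i + r i (k - i))
       = c + p (Suc k) + q (Suc k) + ((\<Sum>i\<le>Suc k. r i (Suc k - i)) - (\<Sum>i\<le>k. r i (k - i)))"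
proof -
  have "(\<Sum>i\<le>m. c + p (m - i) + q i + r i (m - i))
      = (\<Sum>i\<le>m. c) + (\<Sum>i\<le>m. p i) + (\<Sum>i\<le>m. q i) + (\<Sum>i\<le>m. r i (m - i))" for m
    by (simp add: sum.distrib sum_atMost_reflect[of p])
  then show ?thesis
    by (simp add: algebra_simps)
qed

lemma inner_matrix_sum_mult:
  fixes P :: "'i \<Rightarrow> real^'n::finite^'m::finite"
  shows "x \<bullet> ((\<Sum>i\<in>S. P i) *v y) = (\<Sum>i\<in>S. x \<bullet> (P i *v y))"
  by (induction S rule: infinite_finite_induct) (simp_all add: matrix_vector_mult_add_rdistrib inner_add_right)

lemma inner_matrix_mul_add_expand:
  fixes A B E F :: "real^'n::finite^'n"
  shows "x \<bullet> (((A + E) ** (B + F)) *v y)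
       = x \<bullet> ((A ** B) *v y) + x \<bullet> ((A ** F) *v y) + x \<bullet> ((E ** B) *v y) + x \<bullet> ((E ** F) *v y)"
  by (simp add: matrix_vector_mul_assoc[symmetric] matrix_vector_right_distrib
      matrix_vector_mult_add_rdistrib inner_add_right)

lemma sv_approx_first_order_terms:
  assumes A: "doubly_stochastic A" "sv_approx a A A'" and B: "doubly_stochastic B" "sv_approx b B B'"
  shows "\<bar>x \<bullet> ((A ** (B' - B)) *v y)\<bar> + \<bar>x \<bullet> (((A' - A) ** B) *v y)\<bar>
       \<le> max a b * (Dq (transpose (A ** B)) x + Dq (A ** B) y) / 2"
proof -
  have "\<bar>x \<bullet> ((A ** (B' - B)) *v y)\<bar> = \<bar>(transpose A *v x) \<bullet> ((B' - B) *v y)\<bar>"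
    by (simp add: dot_lmul_matrix matrix_vector_mul_assoc[symmetric])
  also have "\<dots> \<le> b * (Dq (transpose B) (transpose A *v x) + Dq B y) / 2"
    using B(2) unfolding sv_approx_def by blast
  also have "\<dots> \<le> max a b * (Dq (transpose B) (transpose A *v x) + Dq B y) / 2"
    using Dq_nonneg[OF B(1)] Dq_nonneg[OF doubly_stochastic_transpose[OF B(1)]]
    by (intro divide_right_mono mult_right_mono) auto
  finally have first: "\<bar>x \<bullet> ((A ** (B' - B)) *v y)\<bar>
      \<le> max a b * (Dq (transpose B) (transpose A *v x) + Dq B y) / 2" .
  have "\<bar>x \<bullet> (((A' - A) ** B) *v y)\<bar> \<le> a * (Dq (transpose A) x + Dq A (B *v y)) / 2"
    using A(2) unfolding sv_approx_def by (simp add: matrix_vector_mul_assoc[symmetric])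
  also have "\<dots> \<le> max a b * (Dq (transpose A) x + Dq A (B *v y)) / 2"
    using Dq_nonneg[OF A(1)] Dq_nonneg[OF doubly_stochastic_transpose[OF A(1)]]
    by (intro divide_right_mono mult_right_mono) auto
  finally show ?thesis
    using first by (simp add: Dq_matrix_mul Dq_transpose_matrix_mul algebra_simps add_divide_distrib)
qed

lemma inner_convolution_difference_eq:
  fixes A B :: "real^'n::finite^'n" and Af Bf :: "nat \<Rightarrow> real^'n^'n"
  shows "x \<bullet> (((\<Sum>i\<le>Suc k. Af i ** Bf (Suc k - i)) - (\<Sum>i\<le>k. Af i ** Bf (k - i)) - A ** B) *v y)
       = x \<bullet> ((A ** (Bf (Suc k) - B)) *v y) + x \<bullet> (((Af (Suc k) - A) ** B) *v y)
         + ((\<Sum>i\<le>Suc k. x \<bullet> (((Af i - A) ** (Bf (Suc k - i) - B)) *v y))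
            - (\<Sum>i\<le>k. x \<bullet> (((Af i - A) ** (Bf (k - i) - B)) *v y)))"
proof -
  have entry: "x \<bullet> ((Af i ** Bf j) *v y) = x \<bullet> ((A ** B) *v y) + x \<bullet> ((A ** (Bf j - B)) *v y)
      + x \<bullet> (((Af i - A) ** B) *v y) + x \<bullet> (((Af i - A) ** (Bf j - B)) *v y)" for i j
    using inner_matrix_mul_add_expand[of x A "Af i - A" B "Bf j - B" y] by simp
  have "x \<bullet> (((\<Sum>i\<le>Suc k. Af i ** Bf (Suc k - i)) - (\<Sum>i\<le>k. Af i ** Bf (k - i)) - A ** B) *v y)
      = (\<Sum>i\<le>Suc k. x \<bullet> ((Af i ** Bf (Suc k - i)) *v y)) - (\<Sum>i\<le>k. x \<bullet> ((Af i ** Bf (k - i)) *v y))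
        - x \<bullet> ((A ** B) *v y)"
    by (simp only: matrix_vector_mult_diff_rdistrib inner_diff_right inner_matrix_sum_mult)
  also have "\<dots> = x \<bullet> ((A ** B) *v y) + x \<bullet> ((A ** (Bf (Suc k) - B)) *v y) + x \<bullet> (((Af (Suc k) - A) ** B) *v y)
      + ((\<Sum>i\<le>Suc k. x \<bullet> (((Af i - A) ** (Bf (Suc k - i) - B)) *v y))
         - (\<Sum>i\<le>k. x \<bullet> (((Af i - A) ** (Bf (k - i) - B)) *v y))) - x \<bullet> ((A ** B) *v y)"
    by (simp only: entry sum_convolution_difference[where c = "x \<bullet> ((A ** B) *v y)"
          and p = "\<lambda>j. x \<bullet> ((A ** (Bf j - B)) *v y)" and q = "\<lambda>i. x \<bullet> (((Af i - A) ** B) *v y)"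
          and r = "\<lambda>i j. x \<bullet> (((Af i - A) ** (Bf j - B)) *v y)"])
  finally show ?thesis
    by (simp add: algebra_simps del: sum.atMost_Suc)
qed

lemma sv_approx_convolution_difference:
  fixes A B :: "real^'n::finite^'n" and Af Bf :: "nat \<Rightarrow> real^'n^'n" and a b :: "nat \<Rightarrow> real"
  assumes A: "doubly_stochastic A" and B: "doubly_stochastic B"
    and Af: "\<And>i. i \<le> Suc k \<Longrightarrow> sv_approx (a i) A (Af i) \<and> 0 < a i"
    and Bf: "\<And>j. j \<le> Suc k \<Longrightarrow> sv_approx (b j) B (Bf j) \<and> 0 < b j"
  shows "sv_approx (max (a (Suc k)) (b (Suc k)) + (\<Sum>i\<le>Suc k. a i * b (Suc k - i)) + (\<Sum>i\<le>k. a i * b (k - i)))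
           (A ** B) ((\<Sum>i\<le>Suc k. Af i ** Bf (Suc k - i)) - (\<Sum>i\<le>k. Af i ** Bf (k - i)))"
  unfolding sv_approx_def
proof (intro allI)
  fix x y :: "real^'n"
  define D where "D = Dq (transpose (A ** B)) x + Dq (A ** B) y"
  define R where "R m = (\<Sum>i\<le>m. x \<bullet> (((Af i - A) ** (Bf (m - i) - B)) *v y))" for m
  have R_bound: "\<bar>R m\<bar> \<le> (\<Sum>i\<le>m. a i * b (m - i)) * D / 2" if "m \<le> Suc k" for m
  proof -
    have "\<bar>x \<bullet> (((Af i - A) ** (Bf j - B)) *v y)\<bar> \<le> a i * b j * D / 2"
      if "i \<le> Suc k" "j \<le> Suc k" for i j
    proof -
      have "\<bar>x \<bullet> (((Af i - A) ** (Bf j - B)) *v y)\<bar> \<le> a i * b j * (Dq (transpose A) x + Dq B y) / 2"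
        using Af[OF that(1)] Bf[OF that(2)] by (intro sv_approx_error_product) auto
      also have "\<dots> \<le> a i * b j * D / 2"
        unfolding D_def using Af[OF that(1)] Bf[OF that(2)] Dq_factors_le_Dq_matrix_mul[OF A B]
        by (intro divide_right_mono mult_left_mono) auto
      finally show ?thesis .
    qed
    then have "\<bar>R m\<bar> \<le> (\<Sum>i\<le>m. a i * b (m - i) * D / 2)"
      unfolding R_def using that by (intro sum_abs[THEN order_trans] sum_mono) auto
    then show ?thesis
      by (simp add: sum_distrib_right sum_divide_distrib)
  qed
  have "\<bar>x \<bullet> ((A ** (Bf (Suc k) - B)) *v y)\<bar> + \<bar>x \<bullet> (((Af (Suc k) - A) ** B) *v y)\<bar>
      \<le> max (a (Suc k)) (b (Suc k)) * D / 2"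
    unfolding D_def using Af[of "Suc k"] Bf[of "Suc k"]
    by (intro sv_approx_first_order_terms A B) auto
  with R_bound[of "Suc k"] R_bound[of k]
  show "\<bar>x \<bullet> (((\<Sum>i\<le>Suc k. Af i ** Bf (Suc k - i)) - (\<Sum>i\<le>k. Af i ** Bf (k - i)) - A ** B) *v y)\<bar>
      \<le> (max (a (Suc k)) (b (Suc k)) + (\<Sum>i\<le>Suc k. a i * b (Suc k - i)) + (\<Sum>i\<le>k. a i * b (k - i)))
         * (Dq (transpose (A ** B)) x + Dq (A ** B) y) / 2"
    unfolding inner_convolution_difference_eq D_def R_def by (simp add: algebra_simps add_divide_distrib)
qed

lemma sv_approx_convolution_difference_epsi:
  fixes A B :: "real^'n::finite^'n" and Af Bf :: "nat \<Rightarrow> real^'n^'n"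
  assumes A: "doubly_stochastic A" "\<And>i. sv_approx (c * epsi \<gamma> n i) A (Af i)"
    and B: "doubly_stochastic B" "\<And>i. sv_approx (c * epsi \<gamma> n i) B (Bf i)"
    and \<gamma>: "0 < \<gamma>" "\<gamma> < 1/2" and L: "0 < log 2 (real n)" and c: "0 < c" "c \<le> exp 1 / 3"
  shows "sv_approx ((1 + 1 / log 2 (real n)) * c * epsi \<gamma> n (Suc k)) (A ** B)
           ((\<Sum>i\<le>Suc k. Af i ** Bf (Suc k - i)) - (\<Sum>i\<le>k. Af i ** Bf (k - i)))"
proof (rule sv_approx_mono)
  have "0 < epsi \<gamma> n i" for i
    using \<gamma> L by (simp add: epsi_def)
  then show "sv_approx (max (c * epsi \<gamma> n (Suc k)) (c * epsi \<gamma> n (Suc k))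
        + (\<Sum>i\<le>Suc k. c * epsi \<gamma> n i * (c * epsi \<gamma> n (Suc k - i)))
        + (\<Sum>i\<le>k. c * epsi \<gamma> n i * (c * epsi \<gamma> n (k - i))))
      (A ** B) ((\<Sum>i\<le>Suc k. Af i ** Bf (Suc k - i)) - (\<Sum>i\<le>k. Af i ** Bf (k - i)))"
    using A B c by (intro sv_approx_convolution_difference) auto
  have "(\<Sum>i\<le>m. c * epsi \<gamma> n i * (c * epsi \<gamma> n (m - i))) = c\<^sup>2 * (\<Sum>i\<le>m. epsi \<gamma> n i * epsi \<gamma> n (m - i))"
    for m
    by (simp add: sum_distrib_left power2_eq_square algebra_simps)
  then show "max (c * epsi \<gamma> n (Suc k)) (c * epsi \<gamma> n (Suc k))
        + (\<Sum>i\<le>Suc k. c * epsi \<gamma> n i * (c * epsi \<gamma> n (Suc k - i)))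
        + (\<Sum>i\<le>k. c * epsi \<gamma> n i * (c * epsi \<gamma> n (k - i)))
      \<le> (1 + 1 / log 2 (real n)) * c * epsi \<gamma> n (Suc k)"
    using epsi_convolution_bound[OF \<gamma> L less_imp_le[OF c(1)] c(2), of k]
    by (simp add: algebra_simps)
  show "doubly_stochastic (A ** B)"
    using A(1) B(1) by (rule doubly_stochastic_matrix_mul)
qed

section \<open>Dyadic intervals\<close>

lemma BS_E:
  assumes "(l, r) \<in> BS n"
  obtains s where "r - l = 2 ^ s" "r \<le> n"
  using assms unfolding BS_def by auto

lemma BS_I: "l = i * 2 ^ k \<Longrightarrow> r = l + 2 ^ k \<Longrightarrow> r \<le> n \<Longrightarrow> (l, r) \<in> BS n"
  unfolding BS_def by auto

lemma BS_halves:
  assumes "(l, r) \<in> BS n" "r - l = 2 ^ Suc s"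
  shows "(l, l + 2 ^ s) \<in> BS n" "(l + 2 ^ s, r) \<in> BS n"
proof -
  obtain i t where lr: "l = i * 2 ^ t" "r = l + 2 ^ t" "r \<le> n"
    using assms(1) unfolding BS_def by auto
  then have "t = Suc s"
    using assms(2) power_inject_exp[of "2::nat" t "Suc s"] by simp
  then have "l = (2 * i) * 2 ^ s" "l + 2 ^ s = (2 * i + 1) * 2 ^ s" "r = (l + 2 ^ s) + 2 ^ s"
    using lr by simp_all
  with lr(3) show "(l, l + 2 ^ s) \<in> BS n" "(l + 2 ^ s, r) \<in> BS n"
    by (auto intro: BS_I[where i = "2 * i" and k = s] BS_I[where i = "2 * i + 1" and k = s])
qed

declare approxM.simps [simp del]

lemma approxM_0: "approxM M0 B 0 l r = M0 l r"
  by (subst approxM.simps) simp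

lemma approxM_Suc_single_step: "approxM M0 B (Suc k) l (Suc l) = Mstep B (Suc l)"
  by (subst approxM.simps) simp

lemma approxM_Suc_split:
  assumes "Suc l < r"
  shows "approxM M0 B (Suc k) l r
       = (\<Sum>i\<le>Suc k. approxM M0 B i l ((l + r) div 2) ** approxM M0 B (Suc k - i) ((l + r) div 2) r)
         - (\<Sum>i\<le>k. approxM M0 B i l ((l + r) div 2) ** approxM M0 B (k - i) ((l + r) div 2) r)"
  using assms by (subst approxM.simps) (simp add: Let_def)

locale dyadic_recursion =
  fixes B :: "nat \<Rightarrow> 'w::finite \<Rightarrow> bool \<Rightarrow> 'w" and n p :: nat and \<gamma> :: real
    and M0 :: "nat \<Rightarrow> nat \<Rightarrow> real^'w^'w"
  assumes regular: "regular_robp n B"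
    and n_eq: "n = 2 ^ p" and p_pos: "1 \<le> p"
    and \<gamma>_pos: "0 < \<gamma>" and \<gamma>_less: "\<gamma> < 1/2"
    and M0_approx: "\<forall>(l, r)\<in>BS n. sv_approx (epsi \<gamma> n 0 / 3) (Mrange B l r) (M0 l r)"
begin

definition C :: "nat \<Rightarrow> real" where
  "C s = (1 + 1 / real p) ^ s / 3"

lemma log_n: "log 2 (real n) = real p"
  using n_eq by simp

lemma epsi_pos: "0 < epsi \<gamma> n k"
  using \<gamma>_pos p_pos by (simp add: epsi_def log_n)

lemma C_ge: "1 / 3 \<le> C s"
  unfolding C_def by (simp add: one_le_power)

lemma Mrange_BS_doubly_stochastic: "(l, r) \<in> BS n \<Longrightarrow> doubly_stochastic (Mrange B l r)"
  by (auto elim: BS_E intro: Mrange_doubly_stochastic[OF regular])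

lemma approxM_0_sv_approx:
  assumes "(l, r) \<in> BS n"
  shows "sv_approx (C s * epsi \<gamma> n 0) (Mrange B l r) (approxM M0 B 0 l r)"
proof (rule sv_approx_mono)
  show "sv_approx (epsi \<gamma> n 0 / 3) (Mrange B l r) (approxM M0 B 0 l r)"
    using M0_approx assms by (auto simp: approxM_0)
  show "epsi \<gamma> n 0 / 3 \<le> C s * epsi \<gamma> n 0"
    using C_ge[of s] epsi_pos[of 0] by (simp add: mult_right_mono)
qed (rule Mrange_BS_doubly_stochastic[OF assms])

lemma approxM_single_step_sv_approx:
  assumes "(l, Suc l) \<in> BS n"
  shows "sv_approx (C 0 * epsi \<gamma> n (Suc k)) (Mrange B l (Suc l)) (approxM M0 B (Suc k) l (Suc l))"
proof -
  have "0 \<le> C 0 * epsi \<gamma> n (Suc k)"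
    using C_ge[of 0] epsi_pos[of "Suc k"] by (intro mult_nonneg_nonneg) linarith+
  then show ?thesis
    unfolding approxM_Suc_single_step Mrange_Suc[symmetric]
    using Mrange_BS_doubly_stochastic[OF assms] by (rule sv_approx_refl)
qed

lemma approxM_split_sv_approx:
  assumes lr: "(l, r) \<in> BS n" "r - l = 2 ^ Suc s"
    and left: "\<And>j. sv_approx (C s * epsi \<gamma> n j) (Mrange B l (l + 2 ^ s)) (approxM M0 B j l (l + 2 ^ s))"
    and right: "\<And>j. sv_approx (C s * epsi \<gamma> n j) (Mrange B (l + 2 ^ s) r) (approxM M0 B j (l + 2 ^ s) r)"
  shows "sv_approx (C (Suc s) * epsi \<gamma> n (Suc k)) (Mrange B l r) (approxM M0 B (Suc k) l r)"
proof -
  define m where "m = l + 2 ^ s"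
  have r_eq: "r = m + 2 ^ s"
    using lr(2) nat_zero_less_power_iff[of 2 s] unfolding m_def by (simp only: power_Suc) arith
  then have "Suc l < r" "(l + r) div 2 = m"
    unfolding m_def using nat_zero_less_power_iff[of 2 s] by arith+
  have "2 ^ Suc s \<le> (2::nat) ^ p"
    using lr n_eq by (auto elim!: BS_E)
  then have "s \<le> p"
    using power_increasing_iff[of "2::nat" "Suc s" p] by simp
  then have C: "0 < C s" "C s \<le> exp 1 / 3"
    using one_plus_inverse_power_le_exp_1[of s p] unfolding C_def
    by (simp_all add: add_pos_nonneg)
  have "sv_approx ((1 + 1 / log 2 (real n)) * C s * epsi \<gamma> n (Suc k)) (Mrange B l m ** Mrange B m r)
      ((\<Sum>i\<le>Suc k. approxM M0 B i l m ** approxM M0 B (Suc k - i) m r)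
       - (\<Sum>i\<le>k. approxM M0 B i l m ** approxM M0 B (k - i) m r))"
    using BS_halves[OF lr] left right C \<gamma>_pos \<gamma>_less p_pos unfolding m_def[symmetric]
    by (intro sv_approx_convolution_difference_epsi Mrange_BS_doubly_stochastic) (simp_all add: log_n)
  moreover have "Mrange B l r = Mrange B l m ** Mrange B m r"
    using r_eq by (intro Mrange_split) (auto simp: m_def)
  moreover have "(1 + 1 / log 2 (real n)) * C s = C (Suc s)"
    unfolding C_def log_n by simp
  ultimately show ?thesis
    using approxM_Suc_split[OF \<open>Suc l < r\<close>, of M0 B k] \<open>(l + r) div 2 = m\<close> by simp
qed

lemma approxM_sv_approx:
  "(l, r) \<in> BS n \<Longrightarrow> r - l = 2 ^ s \<Longrightarrow> sv_approx (C s * epsi \<gamma> n k) (Mrange B l r) (approxM M0 B k l r)"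
proof (induction s arbitrary: l r k)
  case 0
  then have "r = Suc l"
    by simp
  with 0 show ?case
    by (cases k) (simp_all add: approxM_0_sv_approx approxM_single_step_sv_approx)
next
  case (Suc s)
  with BS_halves[OF Suc.prems] show ?case
    by (cases k) (simp_all add: approxM_0_sv_approx approxM_split_sv_approx Suc.IH)
qed

end

theorem lemma4p5:
  fixes B :: "nat \<Rightarrow> 'w::finite \<Rightarrow> bool \<Rightarrow> 'w" and n :: nat and \<gamma> :: real
    and M0 :: "nat \<Rightarrow> nat \<Rightarrow> real^'w^'w"
  assumes "regular_robp n B"
    and "n \<ge> 2" and "\<exists>p. n = 2 ^ p"
    and "0 < \<gamma>" and "\<gamma> < 1/2"
    and "\<forall>(l, r)\<in>BS n. sv_approx (epsi \<gamma> n 0 / 3) (Mrange B l r) (M0 l r)"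
  shows "\<forall>k. \<forall>(l, r)\<in>BS n.
           sv_approx (Ct n (log 2 (real (r - l))) * epsi \<gamma> n k) (Mrange B l r) (approxM M0 B k l r)"
proof (intro allI ballI, clarify)
  fix k l r
  assume lr: "(l, r) \<in> BS n"
  obtain p where n: "n = 2 ^ p"
    using assms(3) by blast
  with \<open>n \<ge> 2\<close> have "1 \<le> p"
    by (cases p) auto
  interpret dyadic_recursion B n p \<gamma> M0
    using assms n \<open>1 \<le> p\<close> by unfold_locales
  obtain s where s: "r - l = 2 ^ s"
    using lr by (blast elim: BS_E)
  have "Ct n (log 2 (real (r - l))) = C s"
    unfolding Ct_def C_def s n by (simp add: powr_realpow add_pos_nonneg)
  then show "sv_approx (Ct n (log 2 (real (r - l))) * epsi \<gamma> n k) (Mrange B l r) (approxM M0 B k l r)"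
    using approxM_sv_approx[OF lr s] by simp
qed

end
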